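(* Let $\mathscr{H}$ be a finite-dimensional complex Hilbert space, let $A=\{a_k\}_{k=1}^{m}$ be a tight frame of $\mathscr{H}$ with frame bound $\alpha>0$ and $B=\{b_j\}_{j=1}^{n}$ a tight frame of $\mathscr{H}$ with frame bound $\beta>0$, and suppose that $A$ and $B$ are $s$-order incompatible. Then for every nonzero vector (pure state) $|\varphi\rangle\in\mathscr{H}$, $$n_A(|\varphi\rangle)+n_B(|\varphi\rangle)\ge s,$$ and the bound is optimal: $\min_{|\varphi\rangle\neq 0}\big(n_A(|\varphi\rangle)+n_B(|\varphi\rangle)\big)=s$.
   Context: A finite family $\{a_k\}_{k=1}^{m}\subset\mathscr{H}$ is a tight frame with frame bound $\alpha>0$ if $\sum_{k=1}^{m}|\langle x,a_k\rangle|^2=\alpha\|x\|^2$ for all $x\in\mathscr{H}$. Write $I=\{1,\dots,m\}$, $J=\{1,\dots,n\}$. The tight frames $A$ (bound $\alpha$) and $B$ (bound $\beta$) are called $s$-order incompatible, for an integer $s$, if: (1) for all nonempty $S\subseteq I$, $T\subseteq J$ with $|S|+|T|<s$ and every nonzero $x\in\mathscr{H}$, the two equalities $\sum_{k\in S}|\langle x,a_k\rangle|^2=\alpha\|x\|^2$ and $\sum_{j\in T}|\langle x,b_j\rangle|^2=\beta\|x\|^2$ do not both hold; and (2) there exist nonempty $S\subseteq I$, $T\subseteq J$ with $|S|+|T|=s$ and a nonzero $x\in\mathscr{H}$ for which both equalities hold. For a vector $|\varphi\rangle$, $n_A(|\varphi\rangle)$ is the number of indices $k$ with $\langle a_k,\varphi\rangle\neq0$,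 and $n_B(|\varphi\rangle)$ is the number of indices $j$ with $\langle b_j,\varphi\rangle\neq 0$. *)

theory Defs
  imports "HOL-Analysis.Analysis"
begin

text \<open>A finite-dimensional complex Hilbert space is modelled as \<open>complex ^ 'd\<close>
  for a finite index type \<open>'d\<close> (every such space is isometrically isomorphic to
  some \<open>\<complex>^d\<close>).\<close>

definition cinner :: "complex ^ 'd \<Rightarrow> complex ^ 'd \<Rightarrow> complex" where
  "cinner x y = (\<Sum>i\<in>UNIV. cnj (x $ i) * y $ i)"

definition tight_frame :: "(nat \<Rightarrow> complex ^ 'd) \<Rightarrow> nat \<Rightarrow> real \<Rightarrow> bool" where
  "tight_frame a m \<alpha> \<longleftrightarrow> \<alpha> > 0 \<and>
     (\<forall>x. (\<Sum>k\<in>{1..m}. (cmod (cinner x (a k)))\<^sup>2) = \<alpha> * (norm x)\<^sup>2)"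

definition s_order_incompatible ::
  "(nat \<Rightarrow> complex ^ 'd) \<Rightarrow> nat \<Rightarrow> real \<Rightarrow> (nat \<Rightarrow> complex ^ 'd) \<Rightarrow> nat \<Rightarrow> real \<Rightarrow> int \<Rightarrow> bool"
where
  "s_order_incompatible a m \<alpha> b n \<beta> s \<longleftrightarrow>
     (\<forall>S T x. S \<subseteq> {1..m} \<and> S \<noteq> {} \<and> T \<subseteq> {1..n} \<and> T \<noteq> {} \<and>
        int (card S + card T) < s \<and> x \<noteq> 0 \<longrightarrow>
        \<not> ((\<Sum>k\<in>S. (cmod (cinner x (a k)))\<^sup>2) = \<alpha> * (norm x)\<^sup>2 \<and>
           (\<Sum>j\<in>T. (cmod (cinner x (b j)))\<^sup>2) = \<beta> * (norm x)\<^sup>2)) \<and>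
     (\<exists>S T x. S \<subseteq> {1..m} \<and> S \<noteq> {} \<and> T \<subseteq> {1..n} \<and> T \<noteq> {} \<and>
        int (card S + card T) = s \<and> x \<noteq> 0 \<and>
        (\<Sum>k\<in>S. (cmod (cinner x (a k)))\<^sup>2) = \<alpha> * (norm x)\<^sup>2 \<and>
        (\<Sum>j\<in>T. (cmod (cinner x (b j)))\<^sup>2) = \<beta> * (norm x)\<^sup>2)"

definition support_count :: "(nat \<Rightarrow> complex ^ 'd) \<Rightarrow> nat \<Rightarrow> complex ^ 'd \<Rightarrow> nat" where
  "support_count a m \<phi> = card {k\<in>{1..m}. cinner (a k) \<phi> \<noteq> 0}"

end

theory Submission
  imports Defs
begin

text \<open>For a tight frame the frame identity, restricted to the indices \<open>k\<close> with
  \<open>\<langle>a_k,\<phi>\<rangle> \<noteq> 0\<close>, still holds, and every index set on which it holds must contain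
  these indices, because the omitted terms are nonnegative and sum to zero.  So the
  support of \<open>\<phi>\<close> is the smallest saturating index set, and is nonempty for \<open>\<phi> \<noteq> 0\<close>.
  Applying the first clause of \<open>s\<close>-order incompatibility to the two supports of \<open>\<phi>\<close>
  gives \<open>n_A(\<phi>) + n_B(\<phi>) \<ge> s\<close>; the vector from the second clause has supports inside
  sets of total size \<open>s\<close>, so it attains the bound.\<close>

definition frame_support :: "(nat \<Rightarrow> complex ^ 'd) \<Rightarrow> nat \<Rightarrow> complex ^ 'd \<Rightarrow> nat set" where
  "frame_support a m \<phi> = {k\<in>{1..m}. cinner (a k) \<phi> \<noteq> 0}"

lemma support_count_eq_card_frame_support:
  "support_count a m \<phi> = card (frame_support a m \<phi>)"
  unfolding support_count_def frame_support_def ..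

lemma frame_support_subset: "frame_support a m \<phi> \<subseteq> {1..m}"
  unfolding frame_support_def by blast

lemma support_count_le: "support_count a m \<phi> \<le> m"
  unfolding support_count_eq_card_frame_support
  using card_mono[OF finite_atLeastAtMost frame_support_subset] by simp

lemma cinner_commute_cnj: "cinner y x = cnj (cinner x y)"
  unfolding cinner_def by (simp add: mult.commute)

lemma cinner_eq_0_commute: "cinner y x = 0 \<longleftrightarrow> cinner x y = 0"
  by (metis cinner_commute_cnj complex_cnj_zero_iff)

lemma tight_frame_sum_eq:
  "tight_frame a m \<alpha> \<Longrightarrow> (\<Sum>k\<in>{1..m}. (cmod (cinner x (a k)))\<^sup>2) = \<alpha> * (norm x)\<^sup>2"
  unfolding tight_frame_def by blast

lemma tight_frame_sum_frame_support:
  assumes "tight_frame a m \<alpha>"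
  shows "(\<Sum>k\<in>frame_support a m x. (cmod (cinner x (a k)))\<^sup>2) = \<alpha> * (norm x)\<^sup>2"
proof -
  have "(\<Sum>k\<in>frame_support a m x. (cmod (cinner x (a k)))\<^sup>2)
      = (\<Sum>k\<in>{1..m}. (cmod (cinner x (a k)))\<^sup>2)"
    by (rule sum.mono_neutral_left) (auto simp: frame_support_def cinner_eq_0_commute)
  then show ?thesis
    using tight_frame_sum_eq[OF assms] by simp
qed

lemma tight_frame_support_nonempty:
  assumes "tight_frame a m \<alpha>" and "x \<noteq> 0"
  shows "frame_support a m x \<noteq> {}"
proof
  assume "frame_support a m x = {}"
  then have "\<alpha> * (norm x)\<^sup>2 = 0"
    using tight_frame_sum_frame_support[OF assms(1), of x] by simp
  moreover have "\<alpha> > 0"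
    using assms(1) unfolding tight_frame_def by blast
  ultimately show False
    using assms(2) by simp
qed

lemma tight_frame_support_subset_saturating:
  assumes "tight_frame a m \<alpha>" and "S \<subseteq> {1..m}"
    and "(\<Sum>k\<in>S. (cmod (cinner x (a k)))\<^sup>2) = \<alpha> * (norm x)\<^sup>2"
  shows "frame_support a m x \<subseteq> S"
proof
  fix k assume k: "k \<in> frame_support a m x"
  have "(\<Sum>j\<in>{1..m}. (cmod (cinner x (a j)))\<^sup>2)
      = (\<Sum>j\<in>S. (cmod (cinner x (a j)))\<^sup>2) + (\<Sum>j\<in>{1..m} - S. (cmod (cinner x (a j)))\<^sup>2)"
    using assms(2) by (simp add: sum.subset_diff add.commute)
  then have "(\<Sum>j\<in>{1..m} - S. (cmod (cinner x (a j)))\<^sup>2) = 0"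
    using tight_frame_sum_eq[OF assms(1)] assms(3) by simp
  then have "\<forall>j\<in>{1..m} - S. cinner x (a j) = 0"
    by (simp add: sum_nonneg_eq_0_iff)
  moreover have "k \<in> {1..m}" "cinner x (a k) \<noteq> 0"
    using k by (auto simp: frame_support_def cinner_eq_0_commute)
  ultimately show "k \<in> S" by blast
qed

lemma incompatible_support_count_ge:
  assumes "tight_frame a m \<alpha>" and "tight_frame b n \<beta>"
    and "s_order_incompatible a m \<alpha> b n \<beta> s" and "\<phi> \<noteq> 0"
  shows "s \<le> int (support_count a m \<phi> + support_count b n \<phi>)"
  using assms(3) frame_support_subset
    tight_frame_support_nonempty[OF assms(1,4)] tight_frame_support_nonempty[OF assms(2,4)]
    tight_frame_sum_frame_support[OF assms(1)] tight_frame_sum_frame_support[OF assms(2)] assms(4)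
  unfolding s_order_incompatible_def support_count_eq_card_frame_support
  by (meson not_le)

lemma incompatible_support_count_attained:
  assumes "tight_frame a m \<alpha>" and "tight_frame b n \<beta>"
    and "s_order_incompatible a m \<alpha> b n \<beta> s"
  obtains x where "x \<noteq> 0" and "int (support_count a m x + support_count b n x) = s"
proof -
  obtain S T x where ST: "S \<subseteq> {1..m}" "T \<subseteq> {1..n}" "int (card S + card T) = s" "x \<noteq> 0"
      and sat: "(\<Sum>k\<in>S. (cmod (cinner x (a k)))\<^sup>2) = \<alpha> * (norm x)\<^sup>2"
        "(\<Sum>j\<in>T. (cmod (cinner x (b j)))\<^sup>2) = \<beta> * (norm x)\<^sup>2"
    using assms(3) unfolding s_order_incompatible_def by blast
  have "support_count a m x \<le> card S"
    unfolding support_count_eq_card_frame_support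
    using ST(1) finite_subset tight_frame_support_subset_saturating[OF assms(1) ST(1) sat(1)]
    by (auto intro: card_mono)
  moreover have "support_count b n x \<le> card T"
    unfolding support_count_eq_card_frame_support
    using ST(2) finite_subset tight_frame_support_subset_saturating[OF assms(2) ST(2) sat(2)]
    by (auto intro: card_mono)
  moreover have "s \<le> int (support_count a m x + support_count b n x)"
    by (rule incompatible_support_count_ge[OF assms ST(4)])
  ultimately show ?thesis
    using that ST(3,4) by simp
qed

theorem mainTheorem2:
  fixes a b :: "nat \<Rightarrow> complex ^ 'd" and m n :: nat and \<alpha> \<beta> :: real and s :: int
  assumes "tight_frame a m \<alpha>" and "tight_frame b n \<beta>"
    and "s_order_incompatible a m \<alpha> b n \<beta> s"
  shows "(\<forall>\<phi>::complex ^ 'd. \<phi> \<noteq> 0 \<longrightarrow>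
            int (support_count a m \<phi> + support_count b n \<phi>) \<ge> s)
       \<and> int (Min {support_count a m \<phi> + support_count b n \<phi> | \<phi>::complex ^ 'd. \<phi> \<noteq> 0}) = s"
proof -
  let ?M = "{support_count a m \<phi> + support_count b n \<phi> | \<phi>::complex ^ 'd. \<phi> \<noteq> 0}"
  have lower: "\<forall>\<phi>::complex ^ 'd. \<phi> \<noteq> 0 \<longrightarrow> s \<le> int (support_count a m \<phi> + support_count b n \<phi>)"
    using incompatible_support_count_ge[OF assms] by blast
  obtain x where x: "x \<noteq> 0" "int (support_count a m x + support_count b n x) = s"
    using incompatible_support_count_attained[OF assms] .
  have "finite ?M"
    by (rule finite_subset[of _ "{..m + n}"]) (auto intro: add_mono support_count_le)
  moreover have "\<forall>v\<in>?M. nat s \<le> v"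
    using lower by force
  moreover have "nat s \<in> ?M"
    using x by force
  ultimately have "Min ?M = nat s"
    by (intro Min_eqI) auto
  then show ?thesis
    using lower x(2) by auto
qed

end
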